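(* Consider the multi-hop control network closed loop of the context with plant, graphs, scheduling, integers $n,r,m,s$, step amplitude $A$ and bounds $\bar O_y,\bar O_u\ge 0$ fixed. Restricted to parameter choices $(\mathbf c,\mathbf d,\mathbf w_R,\mathbf w_O)$ satisfying the deadbeat identity $D_CD_{P'}+N_{C'}N_{G_R}N_PN_{G_O}=z^{l}$ with $l=m+r+1$, each of the constraints $O_y\le\bar O_y$ and $O_u\le\bar O_u$ is equivalent to a finite system of polynomial inequalities in the entries of $\mathbf d$ and $\mathbf w_R$ (with coefficients depending only on the fixed data).
   Context: Plant: $P(z)=\dfrac{N_P(z)}{M(z)D_{P'}(z)}$ with $N_P(z)=b_{n-1}z^{n-1}+\dots+b_0$, $D_{P'}(z)=z^r+a_{r-1}z^{r-1}+\dots+a_0$, $M(z)$ a monic polynomial, $r+\deg M=n$. Controllability network: acyclic directed graph $(V_R,E_R)$ with controller node $v_c$ and actuator node $v_u$, weights $W_R:E_R\to\mathbb R$, and a fixed scheduling assigning to each directed path $\rho$ from $v_c$ to $v_u$ a delay $d(\rho)\in\mathbb N$; $\chi_R(d)$ is the set of paths of delay $d$, $D_R$ the finite set of occurring delays, $\bar D_R=\max D_R$, $W_R(\rho)$ the product of the weights on $\rho$, $\gamma_R(d)=\sum_{\rho\in\chi_R(d)}W_R(\rho)$, $N_{G_R}(z)=\sum_{d\in D_R}\gamma_R(d)z^{\bar D_R-d}$, $G_R(z)=N_{G_R}(z)/z^{\bar D_R}$. Observability network analogously (weights $W_O$, delays $D_O$, $\bar D_O=\max D_O$, $\gamma_O$,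 $N_{G_O}(z)=\sum_{d\in D_O}\gamma_O(d)z^{\bar D_O-d}$, $G_O(z)=N_{G_O}(z)/z^{\bar D_O}$). Controller $C(z)=M(z)z^{\bar D_R}z^{\bar D_O}\,N_{C'}(z)/D_C(z)$ with $N_{C'}(z)=d_sz^s+\dots+d_0$, $D_C(z)=(z-1)(z^m+c_{m-1}z^{m-1}+\dots+c_0)$, $m+1=s+\deg M+\bar D_R+\bar D_O$; $\mathbf c=(c_{m-1},\dots,c_0)$, $\mathbf d=(d_s,\dots,d_0)$, $\mathbf w_R=(W_R(e))_{e\in E_R}$, $\mathbf w_O=(W_O(e))_{e\in E_O}$. With step reference $r(k)=A$, $k\ge0$ ($R(z)=Az/(z-1)$), the plant output and plant input have Z-transforms $Y(z)=\frac{CG_RP}{1+CG_RPG_O}R(z)$ and $U(z)=\frac{CG_R}{1+CG_RPG_O}R(z)$; the error is $e(k)=y(k)-r(k)$. Overshoots: $O_y=\sup_{k\ge0}|e(k)|$ and $O_u=\sup_{k\ge0}|u(k)|$. *)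

theory Defs
  imports "HOL-Computational_Algebra.Computational_Algebra"
                    "HOL-Library.Extended_Real"
begin

inductive_set polyfun :: "(('x \<Rightarrow> real) \<Rightarrow> real) set" where
  pf_const: "(\<lambda>_. c) \<in> polyfun"
| pf_var: "(\<lambda>x. x i) \<in> polyfun"
| pf_add: "p \<in> polyfun \<Longrightarrow> q \<in> polyfun \<Longrightarrow> (\<lambda>x. p x + q x) \<in> polyfun"
| pf_mult: "p \<in> polyfun \<Longrightarrow> q \<in> polyfun \<Longrightarrow> (\<lambda>x. p x * q x) \<in> polyfun"

definition dpath :: "('v \<times> 'v) set \<Rightarrow> 'v \<Rightarrow> 'v \<Rightarrow> 'v list \<Rightarrow> bool" where
  "dpath E u v \<rho> \<longleftrightarrow> \<rho> \<noteq> [] \<and> hd \<rho> = u \<and> last \<rho> = v \<and>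
     (\<forall>i. Suc i < length \<rho> \<longrightarrow> (\<rho> ! i, \<rho> ! Suc i) \<in> E)"

definition paths :: "('v \<times> 'v) set \<Rightarrow> 'v \<Rightarrow> 'v \<Rightarrow> 'v list set" where
  "paths E u v = {\<rho>. dpath E u v \<rho>}"

definition pweight :: "('v \<times> 'v \<Rightarrow> real) \<Rightarrow> 'v list \<Rightarrow> real" where
  "pweight W \<rho> = (\<Prod>i<length \<rho> - 1. W (\<rho> ! i, \<rho> ! Suc i))"

definition chi :: "('v \<times> 'v) set \<Rightarrow> 'v \<Rightarrow> 'v \<Rightarrow> ('v list \<Rightarrow> nat) \<Rightarrow> nat \<Rightarrow> 'v list set" where
  "chi E u v dl d = {\<rho> \<in> paths E u v. dl \<rho> = d}"

definition delays :: "('v \<times> 'v) set \<Rightarrow> 'v \<Rightarrow> 'v \<Rightarrow> ('v list \<Rightarrow> nat) \<Rightarrow> nat set" where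
  "delays E u v dl = dl ` paths E u v"

definition maxdelay :: "('v \<times> 'v) set \<Rightarrow> 'v \<Rightarrow> 'v \<Rightarrow> ('v list \<Rightarrow> nat) \<Rightarrow> nat" where
  "maxdelay E u v dl = Max (delays E u v dl)"

definition gam :: "('v \<times> 'v) set \<Rightarrow> 'v \<Rightarrow> 'v \<Rightarrow> ('v list \<Rightarrow> nat) \<Rightarrow> ('v \<times> 'v \<Rightarrow> real)
    \<Rightarrow> nat \<Rightarrow> real" where
  "gam E u v dl W d = (\<Sum>\<rho>\<in>chi E u v dl d. pweight W \<rho>)"

definition netnum :: "('v \<times> 'v) set \<Rightarrow> 'v \<Rightarrow> 'v \<Rightarrow> ('v list \<Rightarrow> nat) \<Rightarrow> ('v \<times> 'v \<Rightarrow> real)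
    \<Rightarrow> real poly" where
  "netnum E u v dl W = (\<Sum>d\<in>delays E u v dl. monom (gam E u v dl W d) (maxdelay E u v dl - d))"

type_synonym ratfun = "real poly fract"

definition rf :: "real poly \<Rightarrow> ratfun" where
  "rf p = Fract p 1"

definition netG :: "('v \<times> 'v) set \<Rightarrow> 'v \<Rightarrow> 'v \<Rightarrow> ('v list \<Rightarrow> nat) \<Rightarrow> ('v \<times> 'v \<Rightarrow> real)
    \<Rightarrow> ratfun" where
  "netG E u v dl W = rf (netnum E u v dl W) / rf (monom 1 (maxdelay E u v dl))"

text \<open>Causal inverse Z-transform of a proper rational function F(z) = p(z)/q(z)
  (any representation with q nonzero and N = deg q >= deg p; the result does
  not depend on the representation): with x = 1/z,
  F = (x^N p(1/x)) / (x^N q(1/x)), a quotient of polynomials in x whose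
  denominator has nonzero constant term, and f(k) is the coefficient of x^k
  of its power series expansion, i.e. F(z) = sum_k f(k) z^(-k).\<close>
definition ztrans_rep :: "real poly \<Rightarrow> real poly \<Rightarrow> nat \<Rightarrow> real" where
  "ztrans_rep p q k =
     fps_nth (fps_of_poly (reflect_poly p * monom 1 (degree q - degree p)) / fps_of_poly (reflect_poly q)) k"

definition inv_ztrans :: "ratfun \<Rightarrow> nat \<Rightarrow> real" where
  "inv_ztrans F = (SOME f. \<exists>p q. q \<noteq> 0 \<and> degree p \<le> degree q \<and> F = Fract p q \<and> f = ztrans_rep p q)"

definition plantP :: "real poly \<Rightarrow> real poly \<Rightarrow> real poly \<Rightarrow> ratfun" where
  "plantP NP M DP' = rf NP / rf (M * DP')"

definition ctrlC :: "real poly \<Rightarrow> nat \<Rightarrow> nat \<Rightarrow> real poly \<Rightarrow> real poly \<Rightarrow> ratfun" where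
  "ctrlC M DR DO NC Dc = rf (M * monom 1 DR * monom 1 DO * NC) / rf ([:-1, 1:] * Dc)"

definition stepR :: "real \<Rightarrow> ratfun" where
  "stepR A = rf [:0, A:] / rf [:-1, 1:]"

definition Yz :: "ratfun \<Rightarrow> ratfun \<Rightarrow> ratfun \<Rightarrow> ratfun \<Rightarrow> ratfun \<Rightarrow> ratfun" where
  "Yz C GR P GO R = C * GR * P / (1 + C * GR * P * GO) * R"

definition Uz :: "ratfun \<Rightarrow> ratfun \<Rightarrow> ratfun \<Rightarrow> ratfun \<Rightarrow> ratfun \<Rightarrow> ratfun" where
  "Uz C GR P GO R = C * GR / (1 + C * GR * P * GO) * R"

definition overshoot_y :: "ratfun \<Rightarrow> real \<Rightarrow> ereal" where
  "overshoot_y Y A = (SUP k. ereal \<bar>inv_ztrans Y k - A\<bar>)"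

definition overshoot_u :: "ratfun \<Rightarrow> ereal" where
  "overshoot_u U = (SUP k. ereal \<bar>inv_ztrans U k\<bar>)"

end

theory Submission
  imports Defs
begin

text \<open>Under the deadbeat identity the return difference \<open>1 + C G\<^sub>R P G\<^sub>O\<close> collapses to
  \<open>z\<^sup>l / ((z - 1) D\<^sub>c D\<^sub>P\<^sub>')\<close>, so the step responses of output and input are
  \<open>p(z) / (z\<^sup>l (z - 1))\<close> with a numerator \<open>p\<close> that is a product of \<open>N\<^sub>C\<^sub>'\<close>, \<open>N\<^sub>G\<^sub>R\<close> and fixed
  polynomials. Such a response is the running sum of the coefficients of \<open>p\<close> read from the top
  and is constant from time \<open>l + 1\<close> on. Hence each overshoot bound amounts to the finitely many
  conditions \<open>\<bar>y(k) - b\<bar> \<le> c\<close>, \<open>k \<le> l + 1\<close>, and each \<open>y(k)\<close> is a polynomial in the coefficients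
  of \<open>N\<^sub>C\<^sub>'\<close> and the weights \<open>w\<^sub>R\<close>, since \<open>N\<^sub>G\<^sub>R\<close> sums products of edge weights.\<close>

lemma polyfun_sum: "(\<And>i. i \<in> S \<Longrightarrow> f i \<in> polyfun) \<Longrightarrow> (\<lambda>x. \<Sum>i\<in>S. f i x) \<in> polyfun"
proof (induction S rule: infinite_finite_induct)
  case (insert i S)
  then show ?case by (simp add: polyfun.pf_add)
qed (simp_all add: polyfun.pf_const)

lemma polyfun_prod: "(\<And>i. i \<in> S \<Longrightarrow> f i \<in> polyfun) \<Longrightarrow> (\<lambda>x. \<Prod>i\<in>S. f i x) \<in> polyfun"
proof (induction S rule: infinite_finite_induct)
  case (insert i S)
  then show ?case by (simp add: polyfun.pf_mult)
qed (simp_all add: polyfun.pf_const)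

lemma polyfun_diff:
  assumes "p \<in> polyfun" "q \<in> polyfun"
  shows "(\<lambda>x. p x - q x) \<in> polyfun"
proof -
  have "(\<lambda>x. p x + (\<lambda>_. -1) x * q x) \<in> polyfun"
    using assms by (intro polyfun.pf_add polyfun.pf_mult polyfun.pf_const)
  then show ?thesis by simp
qed

lemma polyfun_abs_le_iff_nonneg:
  assumes "finite K" "\<And>k. k \<in> K \<Longrightarrow> f k \<in> polyfun"
  obtains ps where "finite ps" "ps \<subseteq> polyfun"
    "\<And>x. (\<forall>k\<in>K. \<bar>f k x - b\<bar> \<le> c) \<longleftrightarrow> (\<forall>p\<in>ps. 0 \<le> p x)"
proof
  let ?ps = "(\<lambda>k x. c + b - f k x) ` K \<union> (\<lambda>k x. c - b + f k x) ` K"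
  show "finite ?ps" using assms(1) by simp
  show "?ps \<subseteq> polyfun"
    using assms(2) by (auto intro!: polyfun_diff polyfun.pf_add polyfun.pf_const)
  have "(\<forall>k\<in>K. \<bar>f k x - b\<bar> \<le> c) \<longleftrightarrow> (\<forall>k\<in>K. 0 \<le> c + b - f k x \<and> 0 \<le> c - b + f k x)" for x
    by (intro ball_cong refl) (auto simp: abs_le_iff)
  then show "(\<forall>k\<in>K. \<bar>f k x - b\<bar> \<le> c) \<longleftrightarrow> (\<forall>p\<in>?ps. 0 \<le> p x)" for x
    by (simp add: ball_Un Ball_image_comp comp_def ball_conj_distrib)
qed

definition polyfun_poly :: "(('x \<Rightarrow> real) \<Rightarrow> real poly) set" where
  "polyfun_poly = {P. \<forall>j. (\<lambda>x. coeff (P x) j) \<in> polyfun}"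

lemma polyfun_polyD: "P \<in> polyfun_poly \<Longrightarrow> (\<lambda>x. coeff (P x) j) \<in> polyfun"
  by (simp add: polyfun_poly_def)

lemma polyfun_poly_const: "(\<lambda>_. p) \<in> polyfun_poly"
  by (simp add: polyfun_poly_def polyfun.pf_const)

lemma polyfun_poly_monom:
  assumes "c \<in> polyfun"
  shows "(\<lambda>x. monom (c x) k) \<in> polyfun_poly"
proof -
  have "(\<lambda>x. if k = j then c x else 0) \<in> polyfun" for j
    using assms by (cases "k = j") (simp_all add: polyfun.pf_const)
  then show ?thesis
    by (simp add: polyfun_poly_def coeff_monom)
qed

lemma polyfun_poly_sum:
  "(\<And>i. i \<in> S \<Longrightarrow> P i \<in> polyfun_poly) \<Longrightarrow> (\<lambda>x. \<Sum>i\<in>S. P i x) \<in> polyfun_poly"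
  by (simp add: polyfun_poly_def coeff_sum polyfun_sum)

lemma polyfun_poly_mult:
  assumes "P \<in> polyfun_poly" "Q \<in> polyfun_poly"
  shows "(\<lambda>x. P x * Q x) \<in> polyfun_poly"
  using assms
  by (auto simp: polyfun_poly_def coeff_mult intro!: polyfun_sum polyfun.pf_mult)

text \<open>\<open>x\<^sup>N p(1/x)\<close>: with \<open>x = 1/z\<close> this turns \<open>p(z)/q(z)\<close>, \<open>N = deg q\<close>, into the quotient of power
  series in \<open>x\<close> that \<open>ztrans_rep\<close> expands.\<close>
definition reflect_pad :: "nat \<Rightarrow> 'a::comm_semiring_1 poly \<Rightarrow> 'a poly" where
  "reflect_pad N p = reflect_poly p * monom 1 (N - degree p)"

lemma coeff_reflect_pad:
  "degree p \<le> N \<Longrightarrow> coeff (reflect_pad N p) i = (if i \<le> N then coeff p (N - i) else 0)"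
  unfolding reflect_pad_def mult.commute[of "reflect_poly p"]
  by (auto simp: coeff_monom_mult coeff_reflect_poly coeff_eq_0 not_le)

lemma reflect_pad_mult:
  fixes p q :: "'a::idom poly"
  assumes "degree p \<le> N" "degree q \<le> N'"
  shows "reflect_pad (N + N') (p * q) = reflect_pad N p * reflect_pad N' q"
proof (cases "p = 0 \<or> q = 0")
  case True
  then show ?thesis by (auto simp: reflect_pad_def)
next
  case False
  then have "monom (1::'a) (N + N' - degree (p * q)) = monom 1 (N - degree p) * monom 1 (N' - degree q)"
    using assms by (simp add: degree_mult_eq mult_monom)
  then show ?thesis unfolding reflect_pad_def reflect_poly_mult by (simp add: ac_simps)
qed

lemma ztrans_rep_reflect_pad:
  "ztrans_rep p q k = (fps_of_poly (reflect_pad (degree q) p) / fps_of_poly (reflect_pad (degree q) q)) $ k"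
  by (simp add: ztrans_rep_def reflect_pad_def)

lemma fps_divide_eq_divide:
  fixes a b c d :: "'a::field fps"
  assumes "b $ 0 \<noteq> 0" "d $ 0 \<noteq> 0" "a * d = c * b"
  shows "a / b = c / d"
proof -
  have "is_unit b" "is_unit d" using assms(1,2) by simp_all
  then have "a / b = c / d \<longleftrightarrow> a * d = c * b"
    by (simp add: unit_eq_div1 unit_div_commute unit_eq_div2 eq_commute[of a])
  with assms(3) show ?thesis by simp
qed

lemma ztrans_rep_cong:
  assumes "q \<noteq> 0" "q' \<noteq> 0" "degree p \<le> degree q" "degree p' \<le> degree q'"
    and "p * q' = p' * q"
  shows "ztrans_rep p q = ztrans_rep p' q'"
proof -
  let ?N = "degree q" and ?N' = "degree q'"
  have "reflect_pad ?N p * reflect_pad ?N' q' = reflect_pad ?N' p' * reflect_pad ?N q"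
    using assms reflect_pad_mult[of p ?N q' ?N'] reflect_pad_mult[of p' ?N' q ?N]
    by (simp add: add.commute)
  then have "fps_of_poly (reflect_pad ?N p) / fps_of_poly (reflect_pad ?N q)
      = fps_of_poly (reflect_pad ?N' p') / fps_of_poly (reflect_pad ?N' q')"
    using assms(1,2)
    by (intro fps_divide_eq_divide) (simp_all add: coeff_reflect_pad flip: fps_of_poly_mult)
  then show ?thesis
    by (simp add: ztrans_rep_reflect_pad fun_eq_iff)
qed

lemma inv_ztrans_Fract:
  assumes "q \<noteq> 0" "degree p \<le> degree q"
  shows "inv_ztrans (Fract p q) = ztrans_rep p q"
  unfolding inv_ztrans_def
proof (rule some_equality)
  fix f
  assume "\<exists>p' q'. q' \<noteq> 0 \<and> degree p' \<le> degree q' \<and> Fract p q = Fract p' q' \<and> f = ztrans_rep p' q'"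
  then obtain p' q' where "q' \<noteq> 0" "degree p' \<le> degree q'" "Fract p q = Fract p' q'"
    and f: "f = ztrans_rep p' q'"
    by blast
  then have "p * q' = p' * q"
    using assms(1) by (simp add: eq_fract)
  then show "f = ztrans_rep p q"
    using ztrans_rep_cong[OF assms(1) \<open>q' \<noteq> 0\<close> assms(2) \<open>degree p' \<le> degree q'\<close>] f by simp
qed (rule exI[of _ p], rule exI[of _ q], use assms in simp)

lemma inv_ztrans_step_response:
  assumes "degree p \<le> Suc l"
  shows "inv_ztrans (Fract p (monom 1 l * [:-1, 1:])) k = (\<Sum>i\<le>min k (Suc l). coeff p (Suc l - i))"
proof -
  let ?q = "monom 1 l * [:-1, 1:] :: real poly"
  have deg_q: "degree ?q = Suc l"
    by (subst degree_mult_eq) (auto simp: degree_monom_eq)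
  have "reflect_poly (monom (1::real) l) = 1"
    by (auto simp: poly_eq_iff coeff_reflect_poly degree_monom_eq coeff_monom)
  then have denom: "fps_of_poly (reflect_pad (Suc l) ?q) = 1 - fps_X"
    unfolding reflect_pad_def deg_q reflect_poly_mult
    by (simp add: reflect_poly_pCons fps_eq_iff coeff_pCons split: nat.split)
  have geometric: "inverse (1 - fps_X :: real fps) = Abs_fps (\<lambda>_. 1)"
    using fps_inverse_idempotent[of "Abs_fps (\<lambda>_. 1::real)"] by (simp add: fps_inverse_gp')
  have "ztrans_rep p ?q k = (\<Sum>i=0..k. coeff (reflect_pad (Suc l) p) i)"
    unfolding ztrans_rep_reflect_pad deg_q denom
    by (simp add: fps_divide_unit geometric fps_mult_nth)
  moreover have "?q \<noteq> 0"
    using deg_q by auto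
  ultimately have "inv_ztrans (Fract p ?q) k = (\<Sum>i=0..k. coeff (reflect_pad (Suc l) p) i)"
    using assms deg_q inv_ztrans_Fract[of ?q p] by simp
  also have "\<dots> = (\<Sum>i\<le>min k (Suc l). coeff p (Suc l - i))"
    using assms by (intro sum.mono_neutral_cong_right) (auto simp: coeff_reflect_pad)
  finally show ?thesis .
qed

lemma step_response_SUP_le_iff:
  assumes "degree p \<le> Suc l"
  shows "(SUP k. ereal \<bar>inv_ztrans (Fract p (monom 1 l * [:-1, 1:])) k - b\<bar>) \<le> ereal c
     \<longleftrightarrow> (\<forall>k\<le>Suc l. \<bar>(\<Sum>i\<le>k. coeff p (Suc l - i)) - b\<bar> \<le> c)"
proof -
  have "(\<forall>k. Q (min k N)) \<longleftrightarrow> (\<forall>k\<le>N. Q k)" for Q :: "nat \<Rightarrow> bool" and N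
    by (metis min.absorb1 min.cobounded2)
  then show ?thesis
    unfolding SUP_le_iff ereal_less_eq inv_ztrans_step_response[OF assms] by simp
qed

lemma step_response_overshoot_polyfun_system:
  assumes "P \<in> polyfun_poly"
  obtains ps where "finite ps" "ps \<subseteq> polyfun"
    "\<And>x. degree (P x) \<le> Suc l \<Longrightarrow>
       (SUP k. ereal \<bar>inv_ztrans (Fract (P x) (monom 1 l * [:-1, 1:])) k - b\<bar>) \<le> ereal c
         \<longleftrightarrow> (\<forall>p\<in>ps. 0 \<le> p x)"
proof -
  have partial_sums: "(\<lambda>x. \<Sum>i\<le>k. coeff (P x) (Suc l - i)) \<in> polyfun" for k
    using assms by (intro polyfun_sum polyfun_polyD)
  obtain ps where "finite ps" "ps \<subseteq> polyfun"
    and ps: "\<And>x. (\<forall>k\<in>{..Suc l}. \<bar>(\<Sum>i\<le>k. coeff (P x) (Suc l - i)) - b\<bar> \<le> c) \<longleftrightarrow> (\<forall>p\<in>ps. 0 \<le> p x)"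
    using polyfun_abs_le_iff_nonneg[of "{..Suc l}" "\<lambda>k x. \<Sum>i\<le>k. coeff (P x) (Suc l - i)" b c]
      partial_sums by blast
  show ?thesis
  proof (rule that)
    show "(SUP k. ereal \<bar>inv_ztrans (Fract (P x) (monom 1 l * [:-1, 1:])) k - b\<bar>) \<le> ereal c
        \<longleftrightarrow> (\<forall>p\<in>ps. 0 \<le> p x)" if "degree (P x) \<le> Suc l" for x
      unfolding step_response_SUP_le_iff[OF that] ps[of x, symmetric] by auto
  qed fact+
qed

lemma rf_mult: "rf (p * q) = rf p * rf q"
  by (simp add: rf_def)

lemma rf_add: "rf (p + q) = rf p + rf q"
  by (simp add: rf_def)

lemma rf_eq_0_iff: "rf p = 0 \<longleftrightarrow> p = 0"
  by (simp add: rf_def Zero_fract_def eq_fract)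

lemma Fract_eq_rf_divide: "q \<noteq> 0 \<Longrightarrow> Fract p q = rf p / rf q"
  by (simp add: rf_def)

lemma closed_loop_deadbeat_field:
  assumes nonzero: "a \<noteq> 0" "dc \<noteq> 0" "dp \<noteq> 0" "m \<noteq> 0" "zR \<noteq> 0" "zO \<noteq> 0" "zl \<noteq> 0"
    and deadbeat: "a * dc * dp + nc * nR * np * nO = zl"
  shows "Yz (m * zR * zO * nc / (a * dc)) (nR / zR) (np / (m * dp)) (nO / zO) (x / a)
           = x * zO * nc * nR * np / (zl * a)"
    and "Uz (m * zR * zO * nc / (a * dc)) (nR / zR) (np / (m * dp)) (nO / zO) (x / a)
           = x * zO * m * nc * nR * dp / (zl * a)"
proof -
  have "1 + (m * zR * zO * nc / (a * dc)) * (nR / zR) * (np / (m * dp)) * (nO / zO) = zl / (a * dc * dp)"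
    using nonzero deadbeat[symmetric] by (simp add: field_simps)
  then show "Yz (m * zR * zO * nc / (a * dc)) (nR / zR) (np / (m * dp)) (nO / zO) (x / a)
           = x * zO * nc * nR * np / (zl * a)"
    and "Uz (m * zR * zO * nc / (a * dc)) (nR / zR) (np / (m * dp)) (nO / zO) (x / a)
           = x * zO * m * nc * nR * dp / (zl * a)"
    unfolding Yz_def Uz_def using nonzero by (simp_all add: field_simps)
qed

lemma closed_loop_deadbeat:
  fixes DR DO :: nat
  assumes "M \<noteq> 0" "DP' \<noteq> 0" "Dc \<noteq> 0"
    and "[:-1, 1:] * Dc * DP' + NC * NR * NP * NO = monom 1 l"
  defines "GR \<equiv> rf NR / rf (monom 1 DR)" and "GO \<equiv> rf NO / rf (monom 1 DO)"
  shows "Yz (ctrlC M DR DO NC Dc) GR (plantP NP M DP') GO (stepR A)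
           = Fract ([:0, A:] * monom 1 DO * NC * NR * NP) (monom 1 l * [:-1, 1:])"
    and "Uz (ctrlC M DR DO NC Dc) GR (plantP NP M DP') GO (stepR A)
           = Fract ([:0, A:] * monom 1 DO * M * NC * NR * DP') (monom 1 l * [:-1, 1:])"
proof -
  have nonzero: "rf [:-1, 1:] \<noteq> 0" "rf Dc \<noteq> 0" "rf DP' \<noteq> 0" "rf M \<noteq> 0"
    "rf (monom 1 DR) \<noteq> 0" "rf (monom 1 DO) \<noteq> 0" "rf (monom 1 l) \<noteq> 0"
    using assms(1-3) by (simp_all add: rf_eq_0_iff)
  have deadbeat: "rf [:-1, 1:] * rf Dc * rf DP' + rf NC * rf NR * rf NP * rf NO = rf (monom 1 l)"
    using arg_cong[OF assms(4), of rf] by (simp only: rf_mult rf_add)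
  have "monom 1 l * [:-1, 1:] \<noteq> (0 :: real poly)"
    by (rule no_zero_divisors) simp_all
  from closed_loop_deadbeat_field[OF nonzero deadbeat, of "rf [:0, A:]"] show "Yz (ctrlC M DR DO NC Dc) GR (plantP NP M DP') GO (stepR A)
           = Fract ([:0, A:] * monom 1 DO * NC * NR * NP) (monom 1 l * [:-1, 1:])"
    and "Uz (ctrlC M DR DO NC Dc) GR (plantP NP M DP') GO (stepR A)
           = Fract ([:0, A:] * monom 1 DO * M * NC * NR * DP') (monom 1 l * [:-1, 1:])"
    unfolding Fract_eq_rf_divide[OF \<open>monom 1 l * [:-1, 1:] \<noteq> 0\<close>] GR_def GO_def
      ctrlC_def plantP_def stepR_def rf_mult
    by (simp_all add: ac_simps)
qed

lemma degree_mult_le_add: "degree p \<le> a \<Longrightarrow> degree q \<le> b \<Longrightarrow> degree (p * q) \<le> a + b"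
  by (meson add_mono degree_mult_le order.trans)

lemma degree_deadbeat_numerators:
  assumes "degree NP \<le> n - 1" "degree DP' = r" "r + degree M = n"
    and "m + 1 = s + degree M + DR + DO" "degree NC \<le> s" "degree NR \<le> DR"
  shows "degree ([:0, A:] * monom 1 DO * NC * NR * NP) \<le> m + r + 2"
    and "degree ([:0, A:] * monom 1 DO * M * NC * NR * DP') \<le> m + r + 2"
proof -
  have "degree ([:0, A:] * monom 1 DO * NC * NR * NP) \<le> 1 + DO + s + DR + (n - 1)"
    and "degree ([:0, A:] * monom 1 DO * M * NC * NR * DP') \<le> 1 + DO + degree M + s + DR + r"
    using assms by (intro degree_mult_le_add degree_monom_le order.refl; simp)+
  with assms show "degree ([:0, A:] * monom 1 DO * NC * NR * NP) \<le> m + r + 2"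
    and "degree ([:0, A:] * monom 1 DO * M * NC * NR * DP') \<le> m + r + 2"
    by linarith+
qed

lemma netnum_polyfun_poly: "(\<lambda>x. netnum E u v dl (\<lambda>e. x (f e))) \<in> polyfun_poly"
  unfolding netnum_def gam_def pweight_def
  by (intro polyfun_poly_sum polyfun_poly_monom polyfun_sum polyfun_prod polyfun.pf_var)

lemma degree_netnum_le: "degree (netnum E u v dl W) \<le> maxdelay E u v dl"
proof (cases "finite (delays E u v dl)")
  case True
  then show ?thesis unfolding netnum_def maxdelay_def
    by (intro degree_sum_le) (auto intro: order.trans[OF degree_monom_le])
next
  case False
  then show ?thesis unfolding netnum_def by simp
qed

theorem proposition3:
  fixes NP M DP' :: "real poly"
    and n r m s :: nat
    and VR :: "'a set" and ER :: "('a \<times> 'a) set" and vc vu :: 'a and dR :: "'a list \<Rightarrow> nat"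
    and VO :: "'b set" and EO :: "('b \<times> 'b) set" and vo vy :: 'b and dO :: "'b list \<Rightarrow> nat"
    and A Oy_bar Ou_bar :: real
  assumes NP_deg: "degree NP \<le> n - 1"
    and M_monic: "lead_coeff M = 1"
    and DP_monic: "lead_coeff DP' = 1" and DP_deg: "degree DP' = r"
    and n_eq: "r + degree M = n"
    and VR_fin: "finite VR" and ER_sub: "ER \<subseteq> VR \<times> VR" and ER_acyc: "acyclic ER"
    and vc_in: "vc \<in> VR" and vu_in: "vu \<in> VR"
    and VO_fin: "finite VO" and EO_sub: "EO \<subseteq> VO \<times> VO" and EO_acyc: "acyclic EO"
    and vo_in: "vo \<in> VO" and vy_in: "vy \<in> VO"
    and m_eq: "m + 1 = s + degree M + maxdelay ER vc vu dR + maxdelay EO vo vy dO"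
    and Oy_nonneg: "0 \<le> Oy_bar" and Ou_nonneg: "0 \<le> Ou_bar"
  shows
    "(\<exists>ps :: ((nat + ('a \<times> 'a) \<Rightarrow> real) \<Rightarrow> real) set.
        finite ps \<and> ps \<subseteq> polyfun \<and>
        (\<forall>(Dc :: real poly) (NC :: real poly) (wR :: 'a \<times> 'a \<Rightarrow> real) (wO :: 'b \<times> 'b \<Rightarrow> real).
           lead_coeff Dc = 1 \<and> degree Dc = m \<and> degree NC \<le> s \<and>
           [:-1, 1:] * Dc * DP' + NC * netnum ER vc vu dR wR * NP * netnum EO vo vy dO wO
             = monom 1 (m + r + 1)
           \<longrightarrow>
           (overshoot_y
              (Yz (ctrlC M (maxdelay ER vc vu dR) (maxdelay EO vo vy dO) NC Dc)
                  (netG ER vc vu dR wR) (plantP NP M DP') (netG EO vo vy dO wO) (stepR A)) A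
              \<le> ereal Oy_bar
            \<longleftrightarrow> (\<forall>p\<in>ps. 0 \<le> p (\<lambda>v. case v of Inl j \<Rightarrow> coeff NC j | Inr e \<Rightarrow> wR e)))))
   \<and> (\<exists>ps :: ((nat + ('a \<times> 'a) \<Rightarrow> real) \<Rightarrow> real) set.
        finite ps \<and> ps \<subseteq> polyfun \<and>
        (\<forall>(Dc :: real poly) (NC :: real poly) (wR :: 'a \<times> 'a \<Rightarrow> real) (wO :: 'b \<times> 'b \<Rightarrow> real).
           lead_coeff Dc = 1 \<and> degree Dc = m \<and> degree NC \<le> s \<and>
           [:-1, 1:] * Dc * DP' + NC * netnum ER vc vu dR wR * NP * netnum EO vo vy dO wO
             = monom 1 (m + r + 1)
           \<longrightarrow>
           (overshoot_u
              (Uz (ctrlC M (maxdelay ER vc vu dR) (maxdelay EO vo vy dO) NC Dc)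
                  (netG ER vc vu dR wR) (plantP NP M DP') (netG EO vo vy dO wO) (stepR A))
              \<le> ereal Ou_bar
            \<longleftrightarrow> (\<forall>p\<in>ps. 0 \<le> p (\<lambda>v. case v of Inl j \<Rightarrow> coeff NC j | Inr e \<Rightarrow> wR e)))))"
proof -
  define DR DO l where "DR = maxdelay ER vc vu dR" and "DO = maxdelay EO vo vy dO" and "l = m + r + 1"
  define NC_of :: "(nat + 'a \<times> 'a \<Rightarrow> real) \<Rightarrow> real poly"
    where "NC_of x = (\<Sum>j\<le>s. monom (x (Inl j)) j)" for x
  define NR_of :: "(nat + 'a \<times> 'a \<Rightarrow> real) \<Rightarrow> real poly"
    where "NR_of x = netnum ER vc vu dR (\<lambda>e. x (Inr e))" for x
  define Y_of where "Y_of x = [:0, A:] * monom 1 DO * NC_of x * NR_of x * NP" for x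
  define U_of where "U_of x = [:0, A:] * monom 1 DO * M * NC_of x * NR_of x * DP'" for x
  have NC_poly: "NC_of \<in> polyfun_poly"
    unfolding NC_of_def[abs_def] by (intro polyfun_poly_sum polyfun_poly_monom polyfun.pf_var)
  have NR_poly: "NR_of \<in> polyfun_poly"
    unfolding NR_of_def[abs_def] by (rule netnum_polyfun_poly)
  have "Y_of \<in> polyfun_poly"
    unfolding Y_of_def[abs_def] by (intro polyfun_poly_mult polyfun_poly_const NC_poly NR_poly)
  have "U_of \<in> polyfun_poly"
    unfolding U_of_def[abs_def] by (intro polyfun_poly_mult polyfun_poly_const NC_poly NR_poly)
  obtain psY where "finite psY" "psY \<subseteq> polyfun" and psY: "\<And>x. degree (Y_of x) \<le> Suc l \<Longrightarrow>
      (SUP k. ereal \<bar>inv_ztrans (Fract (Y_of x) (monom 1 l * [:-1, 1:])) k - A\<bar>) \<le> ereal Oy_bar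
        \<longleftrightarrow> (\<forall>p\<in>psY. 0 \<le> p x)"
    using \<open>Y_of \<in> polyfun_poly\<close>
    by (rule step_response_overshoot_polyfun_system[where l = l and b = A and c = Oy_bar]) (rule that)
  obtain psU where "finite psU" "psU \<subseteq> polyfun" and psU: "\<And>x. degree (U_of x) \<le> Suc l \<Longrightarrow>
      (SUP k. ereal \<bar>inv_ztrans (Fract (U_of x) (monom 1 l * [:-1, 1:])) k - 0\<bar>) \<le> ereal Ou_bar
        \<longleftrightarrow> (\<forall>p\<in>psU. 0 \<le> p x)"
    using \<open>U_of \<in> polyfun_poly\<close>
    by (rule step_response_overshoot_polyfun_system[where l = l and b = 0 and c = Ou_bar]) (rule that)
  have overshoots:
    "overshoot_y (Yz (ctrlC M DR DO NC Dc) (netG ER vc vu dR wR) (plantP NP M DP')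
        (netG EO vo vy dO wO) (stepR A)) A \<le> ereal Oy_bar \<longleftrightarrow> (\<forall>p\<in>psY. 0 \<le> p x)" (is ?Y)
    "overshoot_u (Uz (ctrlC M DR DO NC Dc) (netG ER vc vu dR wR) (plantP NP M DP')
        (netG EO vo vy dO wO) (stepR A)) \<le> ereal Ou_bar \<longleftrightarrow> (\<forall>p\<in>psU. 0 \<le> p x)" (is ?U)
    if "lead_coeff Dc = 1 \<and> degree Dc = m \<and> degree NC \<le> s \<and>
           [:-1, 1:] * Dc * DP' + NC * netnum ER vc vu dR wR * NP * netnum EO vo vy dO wO
             = monom 1 (m + r + 1)"
      and "x = (\<lambda>v. case v of Inl j \<Rightarrow> coeff NC j | Inr e \<Rightarrow> wR e)"
    for Dc NC wR wO x
  proof -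
    from that(1) have "lead_coeff Dc = 1" and deg_NC: "degree NC \<le> s"
      and deadbeat: "[:-1, 1:] * Dc * DP' + NC * netnum ER vc vu dR wR * NP * netnum EO vo vy dO wO
        = monom 1 l"
      unfolding l_def by blast+
    have NC: "NC_of x = NC"
      using that(2) deg_NC by (simp add: NC_of_def poly_as_sum_of_monoms')
    have NR: "NR_of x = netnum ER vc vu dR wR"
      using that(2) by (simp add: NR_of_def)
    have nonzero: "M \<noteq> 0" "DP' \<noteq> 0" "Dc \<noteq> 0"
      using M_monic DP_monic \<open>lead_coeff Dc = 1\<close> by auto
    have "Yz (ctrlC M DR DO NC Dc) (netG ER vc vu dR wR) (plantP NP M DP')
        (netG EO vo vy dO wO) (stepR A) = Fract (Y_of x) (monom 1 l * [:-1, 1:])"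
      unfolding Y_of_def NC NR netG_def DR_def[symmetric] DO_def[symmetric]
      by (rule closed_loop_deadbeat(1)[OF nonzero deadbeat])
    moreover have "Uz (ctrlC M DR DO NC Dc) (netG ER vc vu dR wR) (plantP NP M DP')
        (netG EO vo vy dO wO) (stepR A) = Fract (U_of x) (monom 1 l * [:-1, 1:])"
      unfolding U_of_def NC NR netG_def DR_def[symmetric] DO_def[symmetric]
      by (rule closed_loop_deadbeat(2)[OF nonzero deadbeat])
    moreover have "degree (Y_of x) \<le> Suc l" "degree (U_of x) \<le> Suc l"
      using degree_deadbeat_numerators[OF NP_deg DP_deg n_eq m_eq[folded DR_def DO_def] deg_NC
          degree_netnum_le[of ER vc vu dR wR, folded DR_def], of A]
      unfolding Y_of_def U_of_def NC NR l_def by simp_all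
    ultimately show ?Y ?U
      using psY psU unfolding overshoot_y_def overshoot_u_def by simp_all
  qed
  show ?thesis
    unfolding DR_def[symmetric] DO_def[symmetric]
    by (rule conjI[OF exI[of _ psY] exI[of _ psU]]; intro conjI allI impI;
        (rule overshoots[OF _ refl] | fact))
qed

end
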